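(* Let $\mathcal{S}$ be a subspace of $\mathbb{C}^n$. Let $\mathcal{D}^+_n$ be the set of $n\times n$ positive definite diagonal matrices and $\mathcal{D}^+_{0,n}$ the set of $n\times n$ positive semidefinite diagonal matrices. Then $$\sup_{D\in\mathcal{D}^+_n}\|P_{D,\mathcal{S}}\|=\sup_{D\in\mathcal{D}^+_{0,n}}\|P_{D,\mathcal{S}}\|.$$
   Context: Norms are operator norms for the Euclidean norm. For a positive semidefinite matrix $D$ and a subspace $\mathcal{S}$ of $\mathbb{C}^n$, write $D=\begin{pmatrix} a & b\\ b^* & c\end{pmatrix}$ with respect to $\mathcal{S}\oplus\mathcal{S}^\perp$; then $P_{D,\mathcal{S}}:=\begin{pmatrix} 1 & a^\dagger b\\ 0&0\end{pmatrix}$ ($a^\dagger$ Moore–Penrose inverse), an idempotent with range $\mathcal{S}$ satisfying $DP_{D,\mathcal{S}}=P_{D,\mathcal{S}}^*D$, of minimal norm among such idempotents. *)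

theory Defs
  imports "HOL-Analysis.Analysis"
begin

definition cadj :: "complex^'n^'m \<Rightarrow> complex^'m^'n" where
  "cadj A = (\<chi> i j. cnj (A $ j $ i))"

definition csubspace :: "(complex^'n) set \<Rightarrow> bool" where
  "csubspace S \<longleftrightarrow> 0 \<in> S \<and> (\<forall>x\<in>S. \<forall>y\<in>S. x + y \<in> S) \<and> (\<forall>c. \<forall>x\<in>S. c *s x \<in> S)"

definition is_mp_inverse :: "complex^'n^'m \<Rightarrow> complex^'m^'n \<Rightarrow> bool" where
  "is_mp_inverse A X \<longleftrightarrow> A ** X ** A = A \<and> X ** A ** X = X \<and>
     cadj (A ** X) = A ** X \<and> cadj (X ** A) = X ** A"

definition mp_inverse :: "complex^'n^'m \<Rightarrow> complex^'m^'n" where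
  "mp_inverse A = (THE X. is_mp_inverse A X)"

definition orth_proj :: "(complex^'n) set \<Rightarrow> complex^'n^'n" where
  "orth_proj S = (THE Q. Q ** Q = Q \<and> cadj Q = Q \<and> range (\<lambda>x. Q *v x) = S)"

text \<open>With respect to S \<oplus> S^\<bottom>, D = [a b; b^* c] and P_{D,S} = [1 a^\<dagger>b; 0 0].
  As an n x n matrix, with Q the orthogonal projection onto S, this is
  Q + (QDQ)^\<dagger> Q D (I - Q), since (QDQ)^\<dagger> = a^\<dagger> \<oplus> 0.\<close>
definition P_DS :: "complex^'n^'n \<Rightarrow> (complex^'n) set \<Rightarrow> complex^'n^'n" where
  "P_DS D S = (let Q = orth_proj S in Q + mp_inverse (Q ** D ** Q) ** Q ** D ** (mat 1 - Q))"

definition opnorm :: "complex^'n^'m \<Rightarrow> real" where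
  "opnorm A = onorm (\<lambda>x. A *v x)"

definition cdiag :: "('n \<Rightarrow> real) \<Rightarrow> complex^'n^'n" where
  "cdiag d = (\<chi> i j. if i = j then complex_of_real (d i) else 0)"

definition pos_diag :: "(complex^'n^'n) set" where
  "pos_diag = {cdiag d | d. \<forall>i. d i > 0}"

definition nonneg_diag :: "(complex^'n^'n) set" where
  "nonneg_diag = {cdiag d | d. \<forall>i. d i \<ge> 0}"

end

theory Submission imports Defs begin

text \<open>Fix \<open>S\<close>, let \<open>Q\<close> be the orthogonal projection onto \<open>S\<close> and write
  \<open>P(D) = P\<^sub>D\<^sub>,\<^sub>S = Q + (QDQ)\<^sup>\<dagger> QD(1 - Q)\<close>.  For a positive semidefinite diagonal \<open>D\<close>
  and \<open>e > 0\<close> put \<open>X = (QDQ)\<^sup>\<dagger>\<close> and \<open>Y = (Q(D + e)Q)\<^sup>\<dagger> (QDQ) X\<close>.  Since \<open>Q(D + e)Q\<close>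
  is invertible on the range of \<open>Q\<close>, and the range of \<open>QD(1 - Q)\<close> lies in that of \<open>QDQ\<close>
  (write \<open>D = E\<^sup>2\<close>), one finds \<open>X = Y + eYX\<close> and \<open>P(D) = P(D + e) + eY(P(D) - Q)\<close>.
  The first identity bounds \<open>\<parallel>Y\<parallel> \<le> 2\<parallel>X\<parallel>\<close> for small \<open>e\<close>, hence
  \<open>\<parallel>P(D)\<parallel> \<le> \<parallel>P(D + e)\<parallel> + O(e)\<close>, where \<open>D + e\<close> is positive definite.\<close>

section \<open>Adjoints and the complex inner product\<close>

lemma cadj_cadj [simp]: "cadj (cadj A) = A"
  by (simp add: cadj_def vec_eq_iff)

lemma cadj_matrix_mult: "cadj (A ** B) = cadj B ** cadj A"
  by (simp add: cadj_def vec_eq_iff matrix_matrix_mult_def mult.commute)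

lemma cadj_diff: "cadj (A - B) = cadj A - cadj B"
  by (simp add: cadj_def vec_eq_iff)

lemma cadj_zero [simp]: "cadj 0 = 0"
  by (simp add: cadj_def vec_eq_iff)

lemma cadj_mat_1 [simp]: "cadj (mat 1) = mat 1"
  by (simp add: cadj_def vec_eq_iff mat_def)

lemma cadj_cdiag [simp]: "cadj (cdiag d) = cdiag d"
  by (simp add: cadj_def vec_eq_iff cdiag_def)

lemma matrix_add_rdistrib: "(A + B) ** C = A ** C + B ** (C :: 'a::semiring_1^_^_)"
  by (simp add: vec_eq_iff matrix_matrix_mult_def distrib_right sum.distrib)

lemma matrix_diff_ldistrib: "A ** (B - C) = A ** B - A ** (C :: 'a::ring_1^_^_)"
  by (simp add: vec_eq_iff matrix_matrix_mult_def right_diff_distrib sum_subtractf)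

lemma matrix_diff_rdistrib: "(A - B) ** C = A ** C - B ** (C :: 'a::ring_1^_^_)"
  by (simp add: vec_eq_iff matrix_matrix_mult_def left_diff_distrib sum_subtractf)

lemmas matrix_distribs =
  matrix_add_ldistrib matrix_add_rdistrib matrix_diff_ldistrib matrix_diff_rdistrib

lemma cdiag_mult_vec: "cdiag d *v x = (\<chi> i. of_real (d i) * x $ i)"
  by (simp add: vec_eq_iff matrix_vector_mult_def cdiag_def if_distrib[of "\<lambda>t. t * _"]
      cong: if_cong)

lemma cdiag_mult: "cdiag a ** cdiag b = cdiag (\<lambda>i. a i * b i)"
  by (simp add: vec_eq_iff matrix_matrix_mult_def cdiag_def if_distrib[of "\<lambda>t. t * _"]
      cong: if_cong)

lemma cdiag_add_const: "cdiag (\<lambda>i. d i + e) = cdiag d + e *\<^sub>R mat 1"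
  by (simp add: vec_eq_iff cdiag_def mat_def) (simp add: scaleR_conv_of_real)

definition cinner :: "complex^'n \<Rightarrow> complex^'n \<Rightarrow> complex" where
  "cinner x y = (\<Sum>i\<in>UNIV. x $ i * cnj (y $ i))"

lemma cinner_adj: "cinner (A *v x) y = cinner x (cadj A *v y)"
  unfolding cinner_def cadj_def matrix_vector_mult_def
  by (simp add: sum_distrib_left sum_distrib_right mult_ac) (rule sum.swap)

lemma cinner_commute: "cinner y x = cnj (cinner x y)"
  by (simp add: cinner_def mult.commute)

lemma cinner_diff_left: "cinner (x - y) z = cinner x z - cinner y z"
  by (simp add: cinner_def left_diff_distrib sum_subtractf)

lemma cinner_diff_right: "cinner z (x - y) = cinner z x - cinner z y"
  by (simp add: cinner_def right_diff_distrib sum_subtractf)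

lemma cinner_scale_left: "cinner (c *s x) y = c * cinner x y"
  by (simp add: cinner_def sum_distrib_left mult.assoc)

lemma cinner_scale_right: "cinner x (c *s y) = cnj c * cinner x y"
  by (simp add: cinner_def sum_distrib_left mult_ac)

lemma cinner_sum_left: "cinner (sum f A) y = (\<Sum>j\<in>A. cinner (f j) y)"
  unfolding cinner_def by (simp add: sum_distrib_right) (rule sum.swap)

lemma cinner_zero_left [simp]: "cinner 0 x = 0"
  by (simp add: cinner_def)

lemma cinner_zero_right [simp]: "cinner x 0 = 0"
  by (simp add: cinner_def)

lemma Re_cinner: "Re (cinner x y) = inner x y"
  by (simp add: cinner_def inner_vec_def inner_complex_def)

lemma cinner_cdiag: "cinner x (cdiag d *v x) = of_real (\<Sum>i\<in>UNIV. d i * (cmod (x $ i))\<^sup>2)"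
  by (simp add: cinner_def cdiag_mult_vec complex_norm_square mult_ac del: of_real_power)

lemma cinner_self_eq_0 [simp]: "cinner x x = 0 \<longleftrightarrow> x = 0"
proof -
  have "cinner x x = of_real (\<Sum>i\<in>UNIV. (cmod (x $ i))\<^sup>2)"
    by (simp add: cinner_def complex_norm_square[symmetric])
  then have "cinner x x = 0 \<longleftrightarrow> (\<forall>i. (cmod (x $ i))\<^sup>2 = 0)"
    by (simp add: sum_nonneg_eq_0_iff del: of_real_sum)
  then show ?thesis
    by (simp add: vec_eq_iff)
qed

lemma cinner_eq_rightI:
  assumes "\<And>a. cinner a x = cinner a y" shows "x = y"
proof -
  have "cinner (x - y) (x - y) = 0"
    by (simp add: cinner_diff_right assms)
  then show ?thesis
    by simp
qed

section \<open>Orthogonal projections onto complex subspaces\<close>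

lemma scaleR_eq_of_real_scale: "r *\<^sub>R x = complex_of_real r *s x"
  by (simp add: vec_eq_iff) (simp add: scaleR_conv_of_real)

lemma csubspace_imp_subspace: "csubspace T \<Longrightarrow> subspace T"
  unfolding csubspace_def subspace_def by (simp add: scaleR_eq_of_real_scale)

lemma csubspace_range_matrix: "csubspace (range (\<lambda>x. A *v x))"
  unfolding csubspace_def
proof (intro conjI ballI allI)
  show "0 \<in> range (\<lambda>x. A *v x)"
    by (metis matrix_vector_mult_0_right rangeI)
  show "x + y \<in> range (\<lambda>x. A *v x)" if "x \<in> range (\<lambda>x. A *v x)" "y \<in> range (\<lambda>x. A *v x)" for x y
    using that by (auto simp: matrix_vector_right_distrib[symmetric])
  show "c *s x \<in> range (\<lambda>x. A *v x)" if "x \<in> range (\<lambda>x. A *v x)" for c x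
    using that by (auto simp: vec_eq_iff matrix_vector_mult_def sum_distrib_left mult_ac
        intro!: image_eqI[where x = "c *s _"])
qed

text \<open>The real orthogonal decomposition of the library is complex orthogonal,
  because a complex subspace is closed under multiplication by \<open>\<i>\<close>.\<close>
lemma csubspace_orthogonal_decomp:
  assumes T: "csubspace T"
  obtains y where "y \<in> T" "\<And>w. w \<in> T \<Longrightarrow> cinner (x - y) w = 0"
proof -
  have "span T = T"
    using csubspace_imp_subspace[OF T] by (simp add: span_eq_iff)
  then obtain y z where y: "y \<in> T" and z: "\<And>w. w \<in> T \<Longrightarrow> orthogonal z w" and "x = y + z"
    using orthogonal_subspace_decomp_exists[of T x] by metis
  have "cinner (x - y) w = 0" if w: "w \<in> T" for w
  proof -
    have "\<i> *s w \<in> T"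
      using T w by (simp add: csubspace_def)
    then have "Re (cinner z w) = 0" "Re (cinner z (\<i> *s w)) = 0"
      using z w by (simp_all add: orthogonal_def Re_cinner)
    then show ?thesis
      using \<open>x = y + z\<close> by (simp add: cinner_scale_right complex_eq_iff)
  qed
  with y show ?thesis
    using that by blast
qed

lemma csubspace_orthogonal_decomp_unique:
  assumes T: "csubspace T" and "y \<in> T" "y' \<in> T"
    and "\<And>w. w \<in> T \<Longrightarrow> cinner (x - y) w = 0" "\<And>w. w \<in> T \<Longrightarrow> cinner (x - y') w = 0"
  shows "y = y'"
proof -
  have "y' - y \<in> T"
    using subspace_diff[OF csubspace_imp_subspace[OF T]] assms(2,3) by blast
  then have "cinner ((x - y) - (x - y')) (y' - y) = 0"
    using assms(4,5) by (simp add: cinner_diff_left)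
  then show ?thesis
    by simp
qed

definition cproj_matrix :: "(complex^'n) set \<Rightarrow> complex^'n^'n" where
  "cproj_matrix T = transpose (\<chi> j. SOME y. y \<in> T \<and> (\<forall>w\<in>T. cinner (axis j 1 - y) w = 0))"

lemma cproj_matrix:
  assumes T: "csubspace T"
  shows "cproj_matrix T *v x \<in> T" "\<And>w. w \<in> T \<Longrightarrow> cinner (x - cproj_matrix T *v x) w = 0"
proof -
  define c where "c j = (SOME y. y \<in> T \<and> (\<forall>w\<in>T. cinner (axis j 1 - y) w = 0))" for j
  have c: "c j \<in> T \<and> (\<forall>w\<in>T. cinner (axis j 1 - c j) w = 0)" for j
    unfolding c_def by (rule someI_ex) (metis csubspace_orthogonal_decomp[OF T])
  have P: "cproj_matrix T *v x = (\<Sum>j\<in>UNIV. x $ j *s c j)"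
    by (simp add: cproj_matrix_def c_def matrix_vector_column)
  show "cproj_matrix T *v x \<in> T"
    unfolding P using T c by (auto simp: csubspace_def intro: subspace_sum[OF csubspace_imp_subspace[OF T]])
  have "x - cproj_matrix T *v x = (\<Sum>j\<in>UNIV. x $ j *s (axis j 1 - c j))"
    by (simp add: P vector_ssub_ldistrib sum_subtractf basis_expansion)
  then have "cinner (x - cproj_matrix T *v x) w = (\<Sum>j\<in>UNIV. x $ j * cinner (axis j 1 - c j) w)"
    for w by (simp only: cinner_sum_left cinner_scale_left)
  then show "cinner (x - cproj_matrix T *v x) w = 0" if "w \<in> T" for w
    using c that by simp
qed

lemma idempotent_mult_eq_of_range_subset:
  fixes A P :: "'a::semiring_1^'n^'n"
  assumes "P ** P = P" and "range (\<lambda>x. A *v x) \<subseteq> range (\<lambda>x. P *v x)"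
  shows "P ** A = A"
proof (rule matrix_eq[THEN iffD2], intro allI)
  fix x
  obtain y where y: "A *v x = P *v y"
    using assms(2) by blast
  have "(P ** A) *v x = P *v (P *v y)"
    by (simp add: matrix_vector_mul_assoc[symmetric] y)
  also have "\<dots> = A *v x"
    by (simp add: matrix_vector_mul_assoc assms(1) y)
  finally show "(P ** A) *v x = A *v x" .
qed

lemma hermitian_idempotent_eqI:
  assumes "Q ** Q = Q" "cadj Q = Q" "Q' ** Q' = Q'" "cadj Q' = Q'"
    and "range (\<lambda>x. Q *v x) = range (\<lambda>x. Q' *v x)"
  shows "Q = Q'"
proof -
  have "Q' ** Q = Q" "Q ** Q' = Q'"
    using idempotent_mult_eq_of_range_subset assms by (metis order_refl)+
  then show ?thesis
    by (metis assms(2,4) cadj_matrix_mult)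
qed

lemma orth_proj:
  assumes T: "csubspace T"
  shows "orth_proj T ** orth_proj T = orth_proj T" "cadj (orth_proj T) = orth_proj T"
    "range (\<lambda>x. orth_proj T *v x) = T"
proof -
  let ?P = "cproj_matrix T"
  have fix_T: "?P *v y = y" if "y \<in> T" for y
    by (rule csubspace_orthogonal_decomp_unique[OF T cproj_matrix(1)[OF T, of y] that, where x = y])
      (simp_all add: cproj_matrix(2)[OF T])
  have idem: "?P ** ?P = ?P"
    by (simp add: matrix_eq matrix_vector_mul_assoc[symmetric] fix_T cproj_matrix(1)[OF T])
  have sym: "cinner (?P *v a) b = cinner a (?P *v b)" for a b
  proof -
    have "cinner (?P *v a) (b - ?P *v b) = 0" "cinner (a - ?P *v a) (?P *v b) = 0"
      using cproj_matrix[OF T] cinner_commute by (metis complex_cnj_zero)+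
    then show ?thesis
      by (simp add: cinner_diff_left cinner_diff_right)
  qed
  have herm: "cadj ?P = ?P"
    by (simp add: matrix_eq cinner_eq_rightI cinner_adj[symmetric] sym)
  have range: "range (\<lambda>x. ?P *v x) = T"
    using cproj_matrix(1)[OF T] fix_T by (metis image_subset_iff rangeI subsetI subset_antisym)
  have "orth_proj T = ?P"
    unfolding orth_proj_def
  proof (rule the_equality)
    fix Q
    assume "Q ** Q = Q \<and> cadj Q = Q \<and> range (\<lambda>x. Q *v x) = T"
    then show "Q = ?P"
      using hermitian_idempotent_eqI[of Q ?P] idem herm range by simp
  qed (use idem herm range in simp)
  with idem herm range show "orth_proj T ** orth_proj T = orth_proj T"
    "cadj (orth_proj T) = orth_proj T" "range (\<lambda>x. orth_proj T *v x) = T"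
    by simp_all
qed

section \<open>Moore--Penrose inverses of Hermitian matrices\<close>

lemma is_mp_inverse_unique:
  assumes X: "is_mp_inverse A X" and Y: "is_mp_inverse A Y"
  shows "X = Y"
proof -
  from X have X1: "A ** X ** A = A" and X2: "X ** A ** X = X" and X3: "cadj (A ** X) = A ** X"
    and X4: "cadj (X ** A) = X ** A" by (auto simp: is_mp_inverse_def)
  from Y have Y1: "A ** Y ** A = A" and Y2: "Y ** A ** Y = Y" and Y3: "cadj (A ** Y) = A ** Y"
    and Y4: "cadj (Y ** A) = Y ** A" by (auto simp: is_mp_inverse_def)
  have AXAY: "A ** X = A ** Y"
  proof -
    have "A ** X = cadj X ** cadj (A ** Y ** A)"
      by (metis X3 Y1 cadj_matrix_mult)
    also have "\<dots> = cadj (A ** X) ** cadj (A ** Y)"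
      by (simp add: cadj_matrix_mult matrix_mul_assoc)
    also have "\<dots> = A ** Y"
      by (metis X1 X3 Y3 cadj_matrix_mult matrix_mul_assoc)
    finally show ?thesis .
  qed
  have XAYA: "X ** A = Y ** A"
  proof -
    have "Y ** A = cadj (A ** X ** A) ** cadj Y"
      by (metis X1 Y4 cadj_matrix_mult)
    also have "\<dots> = cadj (X ** A) ** cadj (Y ** A)"
      by (simp add: cadj_matrix_mult matrix_mul_assoc)
    also have "\<dots> = X ** A"
      by (metis X4 Y1 Y4 cadj_matrix_mult matrix_mul_assoc)
    finally show ?thesis by simp
  qed
  have "X = X ** A ** X"
    by (simp add: X2)
  also have "\<dots> = Y ** A ** Y"
    by (metis AXAY XAYA matrix_mul_assoc)
  also have "\<dots> = Y"
    by (simp add: Y2)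
  finally show ?thesis .
qed

lemma mp_inverse_eqI: "is_mp_inverse A X \<Longrightarrow> mp_inverse A = X"
  unfolding mp_inverse_def by (metis is_mp_inverse_unique the_equality)

lemma is_mp_inverse_cadj: "is_mp_inverse A X \<Longrightarrow> is_mp_inverse (cadj A) (cadj X)"
  unfolding is_mp_inverse_def by (metis cadj_cadj cadj_matrix_mult matrix_mul_assoc)

text \<open>The Moore--Penrose inverse is \<open>(A + 1 - P)\<inverse> P\<close>; the kernel condition makes
  \<open>A + 1 - P\<close> invertible.\<close>
lemma hermitian_mp_inverse_via_projection:
  fixes A P :: "complex^'n^'n"
  assumes A: "cadj A = A" and P: "P ** P = P" "cadj P = P" and AP: "A ** P = A"
    and ker: "\<And>x. A *v x = 0 \<Longrightarrow> P *v x = 0"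
  shows "is_mp_inverse A (mp_inverse A)" "mp_inverse A ** A = P"
proof -
  define B where "B = A + mat 1 - P"
  have PA: "P ** A = A"
    by (metis A AP P(2) cadj_matrix_mult)
  have BP: "B ** P = A" and PB: "P ** B = A"
    by (simp_all add: B_def matrix_distribs AP PA P)
  have "x = 0" if "B *v x = 0" for x
  proof -
    have Ax: "A *v x = 0"
      by (metis PB matrix_vector_mul_assoc matrix_vector_mult_0_right that)
    have "B *v x = A *v x + x - P *v x"
      by (simp add: B_def matrix_vector_mult_add_rdistrib matrix_vector_mult_diff_rdistrib)
    with that Ax ker show ?thesis
      by simp
  qed
  then obtain B' where B'B: "B' ** B = mat 1"
    using matrix_left_invertible_ker by blast
  then have BB': "B ** B' = mat 1"
    using matrix_left_right_inverse by blast
  have B'A: "B' ** A = P"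
    by (metis BP B'B matrix_mul_assoc matrix_mul_lid)
  have AB': "A ** B' = P"
    by (metis PB BB' matrix_mul_assoc matrix_mul_rid)
  have comm: "B' ** P = P ** B'"
    by (metis B'A AB' BP PB B'B BB' matrix_mul_assoc matrix_mul_lid matrix_mul_rid)
  define X where "X = B' ** P"
  have XA: "X ** A = P"
    by (simp add: X_def matrix_mul_assoc[symmetric] PA B'A)
  have AX: "A ** X = P"
    by (simp add: X_def matrix_mul_assoc AB' P)
  have PX: "P ** X = X"
    by (metis X_def comm P(1) matrix_mul_assoc)
  have "is_mp_inverse A X"
    unfolding is_mp_inverse_def by (simp add: AX XA PA PX P)
  then show "is_mp_inverse A (mp_inverse A)" "mp_inverse A ** A = P"
    by (simp_all add: mp_inverse_eqI XA)
qed

lemma hermitian_mp_inverse: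
  fixes A :: "complex^'n^'n"
  assumes A: "cadj A = A"
  shows "is_mp_inverse A (mp_inverse A)" and "cadj (mp_inverse A) = mp_inverse A"
    and "mp_inverse A ** A = A ** mp_inverse A"
proof -
  define P where "P = orth_proj (range (\<lambda>x. A *v x))"
  note P = orth_proj[OF csubspace_range_matrix, of A, folded P_def]
  have PA: "P ** A = A"
    using idempotent_mult_eq_of_range_subset P by (metis order_refl)
  have AP: "A ** P = A"
    by (metis A PA P(2) cadj_matrix_mult)
  have "P *v x = 0" if "A *v x = 0" for x
  proof -
    have "P *v x \<in> range (\<lambda>x. A *v x)"
      unfolding P(3)[symmetric] by simp
    then obtain z where z: "P *v x = A *v z"
      by blast
    have "cinner (P *v x) (P *v x) = cinner (A *v z) (P *v x)"
      by (simp only: z)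
    also have "\<dots> = cinner z ((A ** P) *v x)"
      by (simp add: cinner_adj A matrix_vector_mul_assoc)
    also have "\<dots> = 0"
      by (simp add: AP that)
    finally show ?thesis
      by simp
  qed
  then show mp: "is_mp_inverse A (mp_inverse A)"
    using hermitian_mp_inverse_via_projection(1) A P AP by blast
  show herm: "cadj (mp_inverse A) = mp_inverse A"
    using mp_inverse_eqI[OF is_mp_inverse_cadj[OF mp]] A by simp
  show "mp_inverse A ** A = A ** mp_inverse A"
    by (metis A herm mp cadj_matrix_mult is_mp_inverse_def)
qed

lemma cadj_mult_self_eq_0:
  assumes "cadj M ** M = 0" shows "M = 0"
proof (rule matrix_eq[THEN iffD2], intro allI)
  fix x
  have "cinner (M *v x) (M *v x) = cinner x ((cadj M ** M) *v x)"
    by (simp add: cinner_adj matrix_vector_mul_assoc)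
  then show "M *v x = 0 *v x"
    by (simp add: assms)
qed

lemma cdiag_nonneg_sandwich_eq_0:
  assumes d: "\<forall>i. 0 \<le> d i" and M: "cadj M ** cdiag d ** M = 0"
  shows "cdiag d ** M = 0"
proof -
  define E where "E = cdiag (\<lambda>i. sqrt (d i))"
  have EE: "E ** E = cdiag d"
    using d by (simp add: E_def cdiag_mult)
  have "cadj (E ** M) ** (E ** M) = cadj M ** cdiag d ** M"
    by (simp add: E_def cadj_matrix_mult matrix_mul_assoc EE[symmetric])
  then have "E ** M = 0"
    using M cadj_mult_self_eq_0 by metis
  then show ?thesis
    by (metis EE matrix_mul_assoc times0_right)
qed

lemma mp_inverse_sandwich_range:
  fixes M :: "complex^'n^'m"
  assumes d: "\<forall>i. 0 \<le> d i"
  defines "A \<equiv> cadj M ** cdiag d ** M"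
  shows "A ** mp_inverse A ** (cadj M ** cdiag d) = cadj M ** cdiag d"
proof -
  have "cadj A = A"
    by (simp add: A_def cadj_matrix_mult matrix_mul_assoc)
  note mp = hermitian_mp_inverse[OF this]
  define Z where "Z = mat 1 - A ** mp_inverse A"
  have Z: "cadj Z = Z"
    using mp(1) by (simp add: Z_def cadj_diff is_mp_inverse_def)
  have "cadj (M ** Z) ** cdiag d ** (M ** Z) = (Z ** A) ** Z"
    by (simp add: A_def Z cadj_matrix_mult matrix_mul_assoc)
  also have "Z ** A = 0"
    using mp(1) by (simp add: Z_def matrix_diff_rdistrib is_mp_inverse_def)
  finally have DMZ: "cdiag d ** (M ** Z) = 0"
    using cdiag_nonneg_sandwich_eq_0[OF d] by simp
  have "Z ** (cadj M ** cdiag d) = cadj (cdiag d ** (M ** Z))"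
    by (simp add: Z cadj_matrix_mult matrix_mul_assoc)
  also have "\<dots> = 0"
    by (simp add: DMZ)
  finally have "Z ** (cadj M ** cdiag d) = 0" .
  then have "cadj M ** cdiag d - A ** mp_inverse A ** (cadj M ** cdiag d) = 0"
    by (simp add: Z_def matrix_diff_rdistrib)
  then show ?thesis
    by simp
qed

lemma mp_inverse_compression_pos_diag:
  fixes Q :: "complex^'n^'n"
  assumes Q: "Q ** Q = Q" "cadj Q = Q" and d: "\<forall>i. 0 < d i"
  defines "A \<equiv> Q ** cdiag d ** Q"
  shows "mp_inverse A ** A = Q"
proof -
  have herm: "cadj A = A"
    by (simp add: A_def cadj_matrix_mult matrix_mul_assoc Q)
  have AQ: "A ** Q = A"
    by (metis A_def Q(1) matrix_mul_assoc)
  have "Q *v x = 0" if "A *v x = 0" for x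
  proof -
    have "cinner (Q *v x) (cdiag d *v (Q *v x)) = cinner x (A *v x)"
      by (simp add: A_def cinner_adj Q matrix_vector_mul_assoc matrix_mul_assoc)
    then have "(\<Sum>i\<in>UNIV. d i * (cmod ((Q *v x) $ i))\<^sup>2) = 0"
      using that by (simp add: cinner_cdiag del: of_real_sum)
    then have "d i * (cmod ((Q *v x) $ i))\<^sup>2 = 0" for i
      using d by (simp add: sum_nonneg_eq_0_iff less_imp_le)
    then have "(Q *v x) $ i = 0" for i
      using d by (metis less_irrefl mult_eq_0_iff norm_eq_zero power_eq_0_iff)
    then show ?thesis
      by (simp add: vec_eq_iff)
  qed
  then show ?thesis
    using hermitian_mp_inverse_via_projection(2)[OF herm Q AQ] by blast
qed

section \<open>Operator norm\<close>

lemma opnorm_nonneg: "0 \<le> opnorm A"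
  unfolding opnorm_def by (rule onorm_pos_le[OF matrix_vector_mul_bounded_linear])

lemma opnorm_mult_le: "opnorm (A ** B) \<le> opnorm A * opnorm B"
proof -
  have "(\<lambda>x. (A ** B) *v x) = (\<lambda>x. A *v x) \<circ> (\<lambda>x. B *v x)"
    by (simp add: o_def matrix_vector_mul_assoc)
  then show ?thesis
    unfolding opnorm_def
    by (simp add: onorm_compose[OF matrix_vector_mul_bounded_linear matrix_vector_mul_bounded_linear])
qed

lemma opnorm_add_le: "opnorm (A + B) \<le> opnorm A + opnorm B"
  unfolding opnorm_def matrix_vector_mult_add_rdistrib
  by (rule onorm_triangle[OF matrix_vector_mul_bounded_linear matrix_vector_mul_bounded_linear])

lemma opnorm_scaleR: "opnorm (r *\<^sub>R A) = \<bar>r\<bar> * opnorm A"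
proof -
  have "(\<lambda>x. (r *\<^sub>R A) *v x) = (\<lambda>x. r *\<^sub>R (A *v x))"
    by (simp add: fun_eq_iff vec_eq_iff matrix_vector_mult_def scaleR_sum_right)
  then show ?thesis
    unfolding opnorm_def by (simp add: onorm_scaleR[OF matrix_vector_mul_bounded_linear])
qed

lemma opnorm_diff_le: "opnorm (A - B) \<le> opnorm A + opnorm B"
proof -
  have "opnorm (A - B) \<le> opnorm A + opnorm ((- 1) *\<^sub>R B)"
    using opnorm_add_le[of A "(- 1) *\<^sub>R B"] by simp
  then show ?thesis
    by (simp only: opnorm_scaleR)
qed

lemma opnorm_le_twice_of_eq:
  assumes XY: "X = Y + e *\<^sub>R (Y ** X)" and e: "0 \<le> e" "e * opnorm X \<le> 1 / 2"
  shows "opnorm Y \<le> 2 * opnorm X"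
proof -
  have "Y = X - e *\<^sub>R (Y ** X)"
    using XY by (simp add: algebra_simps)
  then have "opnorm Y \<le> opnorm X + e * opnorm (Y ** X)"
    using opnorm_diff_le[of X "e *\<^sub>R (Y ** X)"] e by (simp add: opnorm_scaleR)
  also have "\<dots> \<le> opnorm X + opnorm Y * (e * opnorm X)"
    using opnorm_mult_le[of Y X] e by (simp add: mult_left_mono mult_ac)
  also have "\<dots> \<le> opnorm X + opnorm Y * (1 / 2)"
    using e opnorm_nonneg[of Y] by (intro add_left_mono mult_left_mono) auto
  finally show ?thesis
    by simp
qed

section \<open>Perturbing \<open>D\<close> by a multiple of the identity\<close>

lemma mp_inverse_compression_shift:
  fixes Q :: "complex^'n^'n" and d :: "'n \<Rightarrow> real"
  assumes Q: "Q ** Q = Q" "cadj Q = Q" and d: "\<forall>i. 0 \<le> d i" and e: "0 < e"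
  defines "A \<equiv> Q ** cdiag d ** Q" and "Ae \<equiv> Q ** cdiag (\<lambda>i. d i + e) ** Q"
  defines "Y \<equiv> mp_inverse Ae ** (A ** mp_inverse A)"
  shows "mp_inverse A = Y + e *\<^sub>R (Y ** mp_inverse A)"
    and "mp_inverse Ae ** (Q ** cdiag (\<lambda>i. d i + e) ** (mat 1 - Q))
      = Y ** (Q ** cdiag d ** (mat 1 - Q))"
proof -
  define X where "X = mp_inverse A"
  define P where "P = A ** X"
  define b where "b = Q ** cdiag d ** (mat 1 - Q)"
  have "cadj A = A"
    by (simp add: A_def cadj_matrix_mult matrix_mul_assoc Q)
  note mp = hermitian_mp_inverse[OF this, folded X_def]
  have XAX: "A ** X ** X = X"
    using mp by (metis is_mp_inverse_def)
  have QX: "Q ** X = X"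
    by (metis XAX A_def Q(1) matrix_mul_assoc)
  have PX: "P ** X = X"
    unfolding P_def by (rule XAX)
  have Pb: "P ** b = b"
  proof -
    have "P ** (Q ** cdiag d) = Q ** cdiag d"
      using mp_inverse_sandwich_range[OF d, of Q] by (simp add: Q(2) P_def X_def A_def)
    then show ?thesis
      by (simp add: b_def matrix_mul_assoc)
  qed
  have Ae: "Ae = A + e *\<^sub>R Q"
    by (simp add: Ae_def A_def cdiag_add_const matrix_distribs matrix_scalar_ac
        scalar_matrix_assoc[symmetric] Q(1))
  have XeAe: "mp_inverse Ae ** Ae = Q"
    unfolding Ae_def using d e
    by (intro mp_inverse_compression_pos_diag Q(1,2)) (auto intro: add_nonneg_pos)
  have "X = mp_inverse Ae ** (Ae ** X)"
    by (metis QX XeAe matrix_mul_assoc)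
  also have "Ae ** X = P + e *\<^sub>R X"
    by (simp add: Ae P_def matrix_add_rdistrib scalar_matrix_assoc[symmetric] QX)
  also have "mp_inverse Ae ** (P + e *\<^sub>R X) = Y + e *\<^sub>R (Y ** X)"
    by (simp add: Y_def X_def[symmetric] P_def[symmetric] matrix_add_ldistrib matrix_scalar_ac
        scalar_matrix_assoc[symmetric] matrix_mul_assoc[symmetric] PX)
  finally show "mp_inverse A = Y + e *\<^sub>R (Y ** mp_inverse A)"
    by (simp add: X_def)
  have "Q ** cdiag (\<lambda>i. d i + e) ** (mat 1 - Q) = b"
    by (simp add: b_def cdiag_add_const matrix_distribs matrix_scalar_ac
        scalar_matrix_assoc[symmetric] Q(1))
  then have "mp_inverse Ae ** (Q ** cdiag (\<lambda>i. d i + e) ** (mat 1 - Q)) = mp_inverse Ae ** (P ** b)"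
    by (simp only: Pb)
  also have "\<dots> = Y ** b"
    by (simp add: Y_def P_def X_def matrix_mul_assoc)
  finally show "mp_inverse Ae ** (Q ** cdiag (\<lambda>i. d i + e) ** (mat 1 - Q))
      = Y ** (Q ** cdiag d ** (mat 1 - Q))"
    by (simp only: b_def)
qed

lemma P_DS_eq:
  "P_DS D S = orth_proj S + mp_inverse (orth_proj S ** D ** orth_proj S)
    ** (orth_proj S ** D ** (mat 1 - orth_proj S))"
  by (simp add: P_DS_def Let_def matrix_mul_assoc)

lemma P_DS_perturbation:
  fixes d :: "'n::finite \<Rightarrow> real" and S :: "(complex^'n) set"
  defines "X \<equiv> mp_inverse (orth_proj S ** cdiag d ** orth_proj S)"
  assumes S: "csubspace S" and d: "\<forall>i. 0 \<le> d i" and e: "0 < e"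
  obtains Y where "X = Y + e *\<^sub>R (Y ** X)"
    and "P_DS (cdiag d) S
      = P_DS (cdiag (\<lambda>i. d i + e)) S + e *\<^sub>R (Y ** (P_DS (cdiag d) S - orth_proj S))"
proof -
  define Q where "Q = orth_proj S"
  define b where "b = Q ** cdiag d ** (mat 1 - Q)"
  define Y where "Y = mp_inverse (Q ** cdiag (\<lambda>i. d i + e) ** Q) ** (Q ** cdiag d ** Q ** X)"
  note shift = mp_inverse_compression_shift[OF orth_proj(1,2)[OF S] d e,
      folded Q_def X_def, folded Y_def b_def]
  have "P_DS (cdiag d) S - Q = X ** b"
    by (simp add: P_DS_eq X_def Q_def b_def)
  moreover have "P_DS (cdiag (\<lambda>i. d i + e)) S = Q + Y ** b"
    using P_DS_eq[of "cdiag (\<lambda>i. d i + e)" S] shift(2) by (simp add: Q_def)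
  moreover have "X ** b = Y ** b + e *\<^sub>R (Y ** (X ** b))"
    by (subst shift(1)) (simp add: matrix_add_rdistrib scalar_matrix_assoc[symmetric] matrix_mul_assoc)
  ultimately show ?thesis
    using that shift(1) by (simp add: Q_def algebra_simps)
qed

lemma opnorm_P_DS_le_shift:
  fixes d :: "'n::finite \<Rightarrow> real" and S :: "(complex^'n) set"
  defines "X \<equiv> mp_inverse (orth_proj S ** cdiag d ** orth_proj S)"
  assumes S: "csubspace S" and d: "\<forall>i. 0 \<le> d i" and e: "0 < e" "e * opnorm X \<le> 1 / 2"
  shows "opnorm (P_DS (cdiag d) S) \<le> opnorm (P_DS (cdiag (\<lambda>i. d i + e)) S)
    + e * (2 * opnorm X * opnorm (P_DS (cdiag d) S - orth_proj S))"
proof -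
  let ?R = "P_DS (cdiag d) S - orth_proj S"
  obtain Y where XY: "X = Y + e *\<^sub>R (Y ** X)"
    and eq: "P_DS (cdiag d) S = P_DS (cdiag (\<lambda>i. d i + e)) S + e *\<^sub>R (Y ** ?R)"
    using P_DS_perturbation[OF S d e(1)] unfolding X_def by blast
  have "opnorm (P_DS (cdiag d) S)
      \<le> opnorm (P_DS (cdiag (\<lambda>i. d i + e)) S) + opnorm (e *\<^sub>R (Y ** ?R))"
    using opnorm_add_le[of "P_DS (cdiag (\<lambda>i. d i + e)) S" "e *\<^sub>R (Y ** ?R)"]
    by (simp only: eq[symmetric])
  also have "opnorm (e *\<^sub>R (Y ** ?R)) = e * opnorm (Y ** ?R)"
    using e(1) by (simp add: opnorm_scaleR)
  also have "opnorm (Y ** ?R) \<le> 2 * opnorm X * opnorm ?R"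
    using opnorm_mult_le[of Y ?R] opnorm_le_twice_of_eq[OF XY less_imp_le[OF e(1)] e(2)]
    by (meson mult_right_mono opnorm_nonneg order_trans)
  finally show ?thesis
    using e(1) by (simp add: mult_left_mono)
qed

lemma ereal_le_of_le_add_linear:
  fixes x C e0 :: real and y :: ereal
  assumes e0: "0 < e0" and le: "\<And>e. 0 < e \<Longrightarrow> e \<le> e0 \<Longrightarrow> ereal x \<le> y + ereal (e * C)"
  shows "ereal x \<le> y"
proof (rule ereal_le_epsilon2)
  fix r :: real
  assume r: "0 < r"
  define e where "e = min e0 (r / (\<bar>C\<bar> + 1))"
  have e: "0 < e" "e \<le> e0"
    using e0 r by (simp_all add: e_def)
  have "e * C \<le> e * \<bar>C\<bar>"
    using e by (simp add: mult_left_mono)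
  also have "\<dots> \<le> r / (\<bar>C\<bar> + 1) * \<bar>C\<bar>"
    by (rule mult_right_mono) (simp_all add: e_def)
  also have "\<dots> \<le> r"
    using r by (simp add: field_simps)
  finally have "ereal (e * C) \<le> ereal r"
    by simp
  then show "ereal x \<le> y + ereal r"
    using le[OF e] by (meson add_left_mono order_trans)
qed

lemma opnorm_P_DS_le_SUP_pos_diag:
  assumes S: "csubspace S" and d: "\<forall>i. 0 \<le> d i"
  shows "ereal (opnorm (P_DS (cdiag d) S)) \<le> (SUP D\<in>pos_diag. ereal (opnorm (P_DS D S)))"
proof -
  define X where "X = mp_inverse (orth_proj S ** cdiag d ** orth_proj S)"
  define C where "C = 2 * opnorm X * opnorm (P_DS (cdiag d) S - orth_proj S)"
  show ?thesis
  proof (rule ereal_le_of_le_add_linear[where C = C])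
    show "0 < 1 / (2 * (opnorm X + 1))"
      using opnorm_nonneg[of X] by simp
    fix e :: real
    assume e: "0 < e" "e \<le> 1 / (2 * (opnorm X + 1))"
    then have "e * opnorm X \<le> 1 / 2"
      using opnorm_nonneg[of X] by (simp add: field_simps)
    then have bound: "opnorm (P_DS (cdiag d) S) \<le> opnorm (P_DS (cdiag (\<lambda>i. d i + e)) S) + e * C"
      using opnorm_P_DS_le_shift[OF S d e(1)] by (simp add: X_def C_def)
    have "cdiag (\<lambda>i. d i + e) \<in> pos_diag"
      using d e by (auto simp: pos_diag_def intro: add_nonneg_pos)
    then have sup: "ereal (opnorm (P_DS (cdiag (\<lambda>i. d i + e)) S))
        \<le> (SUP D\<in>pos_diag. ereal (opnorm (P_DS D S)))"
      by (rule SUP_upper)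
    have "ereal (opnorm (P_DS (cdiag d) S))
        \<le> ereal (opnorm (P_DS (cdiag (\<lambda>i. d i + e)) S)) + ereal (e * C)"
      using bound by simp
    also have "\<dots> \<le> (SUP D\<in>pos_diag. ereal (opnorm (P_DS D S))) + ereal (e * C)"
      using sup by (rule add_right_mono)
    finally show "ereal (opnorm (P_DS (cdiag d) S))
        \<le> (SUP D\<in>pos_diag. ereal (opnorm (P_DS D S))) + ereal (e * C)" .
  qed
qed

theorem proposition3p6:
  fixes S :: "(complex^'n) set"
  assumes "csubspace S"
  shows "(SUP D\<in>(pos_diag :: (complex^'n^'n) set). ereal (opnorm (P_DS D S)))
       = (SUP D\<in>(nonneg_diag :: (complex^'n^'n) set). ereal (opnorm (P_DS D S)))"
proof (rule antisym)
  show "(SUP D\<in>pos_diag. ereal (opnorm (P_DS D S))) \<le> (SUP D\<in>nonneg_diag. ereal (opnorm (P_DS D S)))"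
    by (rule SUP_subset_mono) (auto simp: pos_diag_def nonneg_diag_def less_imp_le)
  show "(SUP D\<in>nonneg_diag. ereal (opnorm (P_DS D S))) \<le> (SUP D\<in>pos_diag. ereal (opnorm (P_DS D S)))"
    by (rule SUP_least) (auto simp: nonneg_diag_def intro: opnorm_P_DS_le_SUP_pos_diag[OF assms])
qed

end
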